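(* Let $n\ge 6$ and let $G$ be a tree on $n$ vertices. Suppose $G\not\cong P_n$ and the degree sequence of $G$ is not $(3,2,\ldots,2,1,1,1)$ (one vertex of degree $3$, $n-4$ of degree $2$, three of degree $1$). Then $\mathrm{irr}_t(G)\ge 6n-20$. Equality holds if and only if the degree sequence of $G$ is $(3,3,2,\ldots,2,1,1,1,1)$, i.e. exactly two vertices of degree $3$, $n-6$ vertices of degree $2$ and $4$ vertices of degree $1$.
   Context: For a graph $G=(V,E)$ and $w\in V$, $d_G(w)$ is the degree of $w$. The total irregularity is $\mathrm{irr}_t(G)=\frac12\sum_{x,y\in V}|d_G(x)-d_G(y)|$, where the sum runs over all ordered pairs of vertices. $P_n$ is the path on $n$ vertices. Degree sequences are listed in nonincreasing order. *)

theory Defs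
  imports Complex_Main "HOL-Library.Multiset"
begin

definition simple_graph :: "'a set \<Rightarrow> 'a set set \<Rightarrow> bool" where
  "simple_graph V E \<longleftrightarrow> finite V \<and>
     (\<forall>e\<in>E. \<exists>u v. u \<noteq> v \<and> e = {u, v} \<and> u \<in> V \<and> v \<in> V)"

definition adj :: "'a set set \<Rightarrow> 'a \<Rightarrow> 'a \<Rightarrow> bool" where
  "adj E u v \<longleftrightarrow> {u, v} \<in> E"

definition degree :: "'a set set \<Rightarrow> 'a \<Rightarrow> nat" where
  "degree E v = card {e \<in> E. v \<in> e}"

definition is_walk :: "'a set \<Rightarrow> 'a set set \<Rightarrow> 'a list \<Rightarrow> bool" where
  "is_walk V E p \<longleftrightarrow> p \<noteq> [] \<and> set p \<subseteq> V \<and>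
     (\<forall>i. Suc i < length p \<longrightarrow> adj E (p ! i) (p ! Suc i))"

definition connected_graph :: "'a set \<Rightarrow> 'a set set \<Rightarrow> bool" where
  "connected_graph V E \<longleftrightarrow>
     (\<forall>u\<in>V. \<forall>v\<in>V. \<exists>p. is_walk V E p \<and> hd p = u \<and> last p = v)"

definition is_cycle :: "'a set \<Rightarrow> 'a set set \<Rightarrow> 'a list \<Rightarrow> bool" where
  "is_cycle V E c \<longleftrightarrow> is_walk V E c \<and> length c \<ge> 3 \<and> distinct c \<and>
     adj E (last c) (hd c)"

definition acyclic_graph :: "'a set \<Rightarrow> 'a set set \<Rightarrow> bool" where
  "acyclic_graph V E \<longleftrightarrow> (\<nexists>c. is_cycle V E c)"

definition is_tree :: "'a set \<Rightarrow> 'a set set \<Rightarrow> bool" where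
  "is_tree V E \<longleftrightarrow> simple_graph V E \<and> V \<noteq> {} \<and> connected_graph V E \<and> acyclic_graph V E"

definition path_edges :: "nat \<Rightarrow> nat set set" where
  "path_edges n = {{i, Suc i} | i. Suc i < n}"

definition isomorphic_to_path :: "'a set \<Rightarrow> 'a set set \<Rightarrow> nat \<Rightarrow> bool" where
  "isomorphic_to_path V E n \<longleftrightarrow>
     (\<exists>f. bij_betw f V {0..<n} \<and>
          (\<forall>u\<in>V. \<forall>v\<in>V. {u, v} \<in> E \<longleftrightarrow> {f u, f v} \<in> path_edges n))"

text \<open>Degree sequence, as a multiset (a nonincreasing list is determined by it).\<close>
definition degree_seq :: "'a set \<Rightarrow> 'a set set \<Rightarrow> nat multiset" where
  "degree_seq V E = image_mset (degree E) (mset_set V)"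

definition irr_t :: "'a set \<Rightarrow> 'a set set \<Rightarrow> real" where
  "irr_t V E = (1/2) * (\<Sum>x\<in>V. \<Sum>y\<in>V. \<bar>real (degree E x) - real (degree E y)\<bar>)"

end

theory Submission
  imports Defs
begin

(* Split the vertices of the tree into leaves (l of them), vertices of
   degree 2 (k of them) and high vertices of degree at least 3 (m of them,
   with degree sum S).  Summing |d(x) - d(y)| class by class gives
     irr_t = l k + l (S - m) + k (S - 2m) + P/2,
   where P >= 0 is the contribution of pairs of high vertices.  A tree has
   n - 1 edges, so the handshake lemma yields n = l + k + m and
   l + 2k + S + 2 = 2n; a tree with no high vertex is a path, so m >= 1.
   Under these constraints an elementary polynomial estimate shows that the
   main term is at least 6n - 20, with equality only for m = 2, S = 6, and
   the two exceptional degree sequences are exactly the cases m = 1, S = 3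
   and m = 2, S = 6. *)

section \<open>Simple graphs and walks\<close>

lemma adj_sym: "adj E u v \<longleftrightarrow> adj E v u"
  by (simp add: adj_def insert_commute)

lemma simple_graph_edgeE:
  assumes "simple_graph V E" "e \<in> E"
  obtains x y where "x \<noteq> y" "e = {x, y}" "x \<in> V" "y \<in> V"
  using assms unfolding simple_graph_def by blast

lemma simple_graph_adj:
  assumes "simple_graph V E" "adj E u v"
  shows "u \<noteq> v" "u \<in> V" "v \<in> V"
  using assms(2) unfolding adj_def
  by (auto elim!: simple_graph_edgeE[OF assms(1)] simp: doubleton_eq_iff)

lemma simple_graph_finite_edges:
  assumes "simple_graph V E"
  shows "finite E"
proof -
  have "E \<subseteq> Pow V" by (auto elim: simple_graph_edgeE[OF assms])
  moreover have "finite V" using assms by (simp add: simple_graph_def)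
  ultimately show ?thesis by (meson finite_Pow_iff finite_subset)
qed

lemma degree_ge_3:
  assumes "finite E" "adj E x a" "adj E x b" "adj E x c" "a \<noteq> b" "a \<noteq> c" "b \<noteq> c"
  shows "3 \<le> degree E x"
proof -
  have "card {{x, a}, {x, b}, {x, c}} = 3" using assms(5-7) by (simp add: doubleton_eq_iff)
  moreover have "{{x, a}, {x, b}, {x, c}} \<subseteq> {e \<in> E. x \<in> e}" using assms(2-4) by (auto simp: adj_def)
  moreover have "finite {e \<in> E. x \<in> e}" using assms(1) by simp
  ultimately show ?thesis unfolding degree_def by (metis card_mono)
qed

lemma handshake:
  assumes "simple_graph V E"
  shows "(\<Sum>v\<in>V. degree E v) = 2 * card E"
proof -
  have fV: "finite V" using assms by (simp add: simple_graph_def)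
  have fE: "finite E" using simple_graph_finite_edges[OF assms] .
  have "(\<Sum>v\<in>V. degree E v) = (\<Sum>v\<in>V. \<Sum>e\<in>E. if v \<in> e then 1 else 0)"
    unfolding degree_def by (rule sum.cong) (simp_all add: sum.If_cases fE Int_def)
  also have "\<dots> = (\<Sum>e\<in>E. \<Sum>v\<in>V. if v \<in> e then 1 else 0)" by (rule sum.swap)
  also have "\<dots> = (\<Sum>e\<in>E. 2)"
  proof (rule sum.cong)
    fix e assume "e \<in> E"
    then obtain a b where ab: "a \<noteq> b" "e = {a, b}" "a \<in> V" "b \<in> V"
      by (rule simple_graph_edgeE[OF assms])
    have "(\<Sum>v\<in>V. if v \<in> e then 1 else 0) = card (V \<inter> e)"
      by (simp add: sum.If_cases fV)
    also have "V \<inter> e = {a, b}" using ab by auto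
    finally show "(\<Sum>v\<in>V. if v \<in> e then 1 else 0) = (2::nat)" using ab by simp
  qed simp
  finally show ?thesis by simp
qed

lemma is_walk_successively:
  "is_walk V E p \<longleftrightarrow> p \<noteq> [] \<and> set p \<subseteq> V \<and> successively (adj E) p"
  unfolding is_walk_def successively_conv_nth by blast

lemma is_walk_rev: "is_walk V E (rev p) \<longleftrightarrow> is_walk V E p"
proof -
  have "(\<lambda>x y. adj E y x) = adj E" by (intro ext) (rule adj_sym)
  then have "successively (adj E) (rev p) \<longleftrightarrow> successively (adj E) p"
    unfolding successively_rev by (rule arg_cong[where f = "\<lambda>P. successively P p"])
  then show ?thesis unfolding is_walk_successively by simp
qed

lemma connected_neighbour:
  assumes "connected_graph V E" "v \<in> V" "u \<in> V" "u \<noteq> v"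
  obtains w where "adj E v w"
proof -
  obtain p where p: "is_walk V E p" "hd p = v" "last p = u"
    using assms unfolding connected_graph_def by meson
  have "p \<noteq> []" using p(1) by (simp add: is_walk_def)
  then obtain q where pq: "p = v # q" using p(2) by (cases p) auto
  with p(3) assms(4) obtain x q' where "q = x # q'" by (cases q) auto
  then show ?thesis using p(1) pq that unfolding is_walk_successively by auto
qed

lemma connected_closed_subset:
  assumes conn: "connected_graph V E" and x0: "x0 \<in> A" "A \<subseteq> V"
    and closed: "\<And>x w. x \<in> A \<Longrightarrow> adj E x w \<Longrightarrow> w \<in> A"
  shows "A = V"
proof
  show "V \<subseteq> A"
  proof
    fix v assume v: "v \<in> V"
    obtain q where q: "is_walk V E q" "hd q = x0" "last q = v"
      using conn x0 v unfolding connected_graph_def by blast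
    have "q ! t \<in> A" if "t < length q" for t
      using that
    proof (induction t)
      case 0
      then show ?case using q(2) x0 by (simp add: hd_conv_nth[symmetric])
    next
      case (Suc t)
      then show ?case using closed q(1) by (simp add: is_walk_def)
    qed
    moreover have "q \<noteq> []" using q(1) by (simp add: is_walk_def)
    ultimately have "last q \<in> A" by (simp add: last_conv_nth)
    then show "v \<in> A" using q(3) by simp
  qed
qed (use x0 in simp)

section \<open>Longest paths\<close>

definition longest_path :: "'a set \<Rightarrow> 'a set set \<Rightarrow> 'a list \<Rightarrow> bool" where
  "longest_path V E p \<longleftrightarrow> is_walk V E p \<and> distinct p \<and>
     (\<forall>q. is_walk V E q \<and> distinct q \<longrightarrow> length q \<le> length p)"

lemma longest_path_exists:
  assumes "finite V" "V \<noteq> {}"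
  obtains p where "longest_path V E p"
proof -
  obtain x where "x \<in> V" using assms(2) by blast
  then have start: "is_walk V E [x] \<and> distinct [x]" by (simp add: is_walk_def)
  have bound: "\<forall>q. is_walk V E q \<and> distinct q \<longrightarrow> length q < card V + 1"
  proof (intro allI impI)
    fix q assume q: "is_walk V E q \<and> distinct q"
    then have "card (set q) \<le> card V" using assms(1) by (intro card_mono) (auto simp: is_walk_def)
    then show "length q < card V + 1" using q distinct_card by fastforce
  qed
  show ?thesis
    using ex_has_greatest_nat[of _ "[x]" length "card V + 1", OF start bound] that
    unfolding longest_path_def by blast
qed

lemma longest_path_rev: "longest_path V E (rev p) \<longleftrightarrow> longest_path V E p"
  by (simp add: longest_path_def is_walk_rev)

text \<open>A longest path cannot be extended, so every neighbour of an endpoint lies on it.\<close>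
lemma longest_path_hd_neighbour:
  assumes sg: "simple_graph V E" and p: "longest_path V E p" and w: "adj E (hd p) w"
  shows "w \<in> set p"
proof (rule ccontr)
  assume w_new: "w \<notin> set p"
  have walk: "p \<noteq> []" "set p \<subseteq> V" "successively (adj E) p" and dist: "distinct p"
    using p unfolding longest_path_def is_walk_successively by auto
  have "is_walk V E (w # p)"
    using walk simple_graph_adj[OF sg w] adj_sym[of E "hd p" w] w
    unfolding is_walk_successively successively_Cons by auto
  moreover have "distinct (w # p)" using dist w_new by simp
  ultimately have "length (w # p) \<le> length p" using p unfolding longest_path_def by blast
  then show False by simp
qed

lemma longest_path_last_neighbour:
  assumes "simple_graph V E" "longest_path V E p" "adj E (last p) w"
  shows "w \<in> set p"
  using longest_path_hd_neighbour[of V E "rev p" w] assms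
  by (simp add: longest_path_rev hd_rev)

section \<open>Trees\<close>

text \<open>A path in a tree has no chords: an edge between non-consecutive vertices
  would close a cycle.\<close>
lemma tree_path_no_chord:
  assumes tree: "is_tree V E" and p: "is_walk V E p" "distinct p"
    and ij: "Suc i < j" "j < length p"
  shows "\<not> adj E (p ! i) (p ! j)"
proof
  assume chord: "adj E (p ! i) (p ! j)"
  define c where "c = take (Suc j - i) (drop i p)"
  have len: "length c = Suc j - i" using ij c_def by auto
  have nth_c: "c ! t = p ! (i + t)" if "t < Suc j - i" for t using that ij c_def by auto
  have "is_walk V E c"
    unfolding is_walk_def
  proof (intro conjI allI impI)
    show "c \<noteq> []" using len ij by auto
    show "set c \<subseteq> V" using p(1) c_def
      by (meson is_walk_def order_trans set_drop_subset set_take_subset)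
    fix t assume "Suc t < length c"
    then show "adj E (c ! t) (c ! Suc t)"
      using nth_c len p(1) ij unfolding is_walk_def by auto
  qed
  moreover have "distinct c" "3 \<le> length c" using p(2) ij len c_def by auto
  moreover have "c \<noteq> []" using len ij by auto
  then have "hd c = p ! i" "last c = p ! j"
    using nth_c[of 0] nth_c[of "j - i"] len ij by (simp_all add: hd_conv_nth last_conv_nth)
  ultimately have "is_cycle V E c" using chord adj_sym unfolding is_cycle_def by metis
  then show False using tree unfolding is_tree_def acyclic_graph_def by blast
qed

lemma card_ge_2_other_element:
  assumes "2 \<le> card V" "v \<in> V"
  obtains y where "y \<in> V" "y \<noteq> v"
proof -
  have "\<not> V \<subseteq> {v}"
  proof
    assume "V \<subseteq> {v}"
    then have "card V \<le> card {v}" by (intro card_mono) simp_all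
    then show False using assms(1) by simp
  qed
  then show ?thesis using that by blast
qed

lemma tree_neighbour:
  assumes tree: "is_tree V E" and two: "2 \<le> card V" and v: "v \<in> V"
  obtains w where "adj E v w"
proof -
  obtain y where "y \<in> V" "y \<noteq> v" using card_ge_2_other_element[OF two v] .
  then show ?thesis using connected_neighbour[OF _ v] tree that by (auto simp: is_tree_def)
qed

lemma tree_degree_pos:
  assumes tree: "is_tree V E" and two: "2 \<le> card V" and v: "v \<in> V"
  shows "1 \<le> degree E v"
proof -
  obtain w where "adj E v w" using tree_neighbour[OF assms] .
  then have "{v, w} \<in> {e \<in> E. v \<in> e}" by (simp add: adj_def)
  moreover have "finite {e \<in> E. v \<in> e}"
    using simple_graph_finite_edges[of V E] tree by (simp add: is_tree_def)
  ultimately show ?thesis unfolding degree_def by (auto simp: Suc_le_eq card_gt_0_iff)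
qed

text \<open>The first vertex of a longest path in a tree is a leaf.\<close>
lemma tree_has_leaf:
  assumes tree: "is_tree V E" and two: "2 \<le> card V"
  obtains v u where "v \<in> V" "u \<in> V" "u \<noteq> v" "{e \<in> E. v \<in> e} = {{v, u}}"
proof -
  have sg: "simple_graph V E" using tree by (simp add: is_tree_def)
  have "finite V" "V \<noteq> {}" using tree by (auto simp: is_tree_def simple_graph_def)
  then obtain p where lp: "longest_path V E p" using longest_path_exists by blast
  then have p: "is_walk V E p" "distinct p" by (auto simp: longest_path_def)
  then obtain v q where pq: "p = v # q" by (cases p) (auto simp: is_walk_def)
  have vV: "v \<in> V" using p(1) pq by (auto simp: is_walk_def)
  obtain w where "adj E v w" using tree_neighbour[OF tree two vV] .
  then have vw: "adj E (hd p) w" using pq by simp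
  have "w \<in> set p" "w \<noteq> v" using longest_path_hd_neighbour[OF sg lp vw] simple_graph_adj[OF sg vw] pq by auto
  then obtain u r where qr: "q = u # r" using pq by (cases q) auto
  have only_u: "z = u" if "adj E v z" for z
  proof -
    have "z \<in> set p" using longest_path_hd_neighbour[OF sg lp] that pq by simp
    then obtain j where j: "j < length p" "p ! j = z" by (meson in_set_conv_nth)
    have "j \<noteq> 0" using j pq simple_graph_adj(1)[OF sg that] by (metis nth_Cons_0)
    moreover have "\<not> Suc 0 < j" using tree_path_no_chord[OF tree p, of 0 j] j that pq by auto
    ultimately show "z = u" using j pq qr by (cases j) auto
  qed
  have "{e \<in> E. v \<in> e} = {{v, u}}"
  proof (intro equalityI subsetI)
    fix e assume e: "e \<in> {e \<in> E. v \<in> e}"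
    then obtain x y where xy: "e = {x, y}" by (auto elim: simple_graph_edgeE[OF sg])
    define z where "z = (if x = v then y else x)"
    have "e = {v, z}" using xy e z_def by auto
    then have "adj E v z" using e by (simp add: adj_def)
    then show "e \<in> {{v, u}}" using only_u \<open>e = {v, z}\<close> by simp
  next
    show "e \<in> {e \<in> E. v \<in> e}" if "e \<in> {{v, u}}" for e
      using that p(1) pq qr by (auto simp: is_walk_successively adj_def)
  qed
  moreover have "u \<in> V" "u \<noteq> v" using p pq qr by (auto simp: is_walk_successively)
  ultimately show ?thesis using that vV by blast
qed

section \<open>Deleting a leaf and counting edges\<close>

text \<open>Let v be a leaf with unique neighbour u.  In a walk whose ends differ from
  v, every visit to v is a detour u, v, u; cutting out these detours gives a
  walk that avoids v and the edge {v, u}.\<close>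
lemma walk_avoiding_leaf:
  assumes sg: "simple_graph V E" and leaf: "\<forall>e\<in>E. v \<in> e \<longrightarrow> e = {v, u}"
  shows "successively (adj E) q \<Longrightarrow> q \<noteq> [] \<Longrightarrow> hd q \<noteq> v \<Longrightarrow> last q \<noteq> v \<Longrightarrow>
    \<exists>q'. q' \<noteq> [] \<and> set q' \<subseteq> set q - {v} \<and> successively (adj (E - {{v, u}})) q' \<and>
         hd q' = hd q \<and> last q' = last q"
proof (induction "length q" arbitrary: q rule: less_induct)
  case less
  have only_u: "x = u" if "adj E x v" for x
  proof -
    have "x \<noteq> v" using simple_graph_adj[OF sg that] by blast
    moreover have "{x, v} = {v, u}" using leaf that unfolding adj_def by blast
    ultimately show ?thesis by (auto simp: doubleton_eq_iff)
  qed
  show ?case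
  proof (cases "v \<in> set q")
    case False
    have "successively (adj (E - {{v, u}})) q"
    proof (rule successively_mono[OF less.prems(1)])
      fix x y assume "x \<in> set q" "y \<in> set q" "adj E x y"
      then show "adj (E - {{v, u}}) x y" using False unfolding adj_def by (auto simp: doubleton_eq_iff)
    qed
    then show ?thesis using less.prems False by blast
  next
    case True
    then obtain xs ys where q: "q = xs @ v # ys" by (meson split_list)
    have xs: "xs \<noteq> []" and ys: "ys \<noteq> []" using q less.prems(3,4) by auto
    have xs_walk: "successively (adj E) xs" and "adj E (last xs) v"
      and v_ys: "successively (adj E) (v # ys)"
      using less.prems(1) xs unfolding q successively_append_iff by auto
    then have last_xs: "last xs = u" using only_u by blast
    have "adj E v (hd ys)" and ys_walk: "successively (adj E) ys"
      using v_ys ys unfolding successively_Cons by auto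
    then obtain ys' where ys': "ys = u # ys'" using ys only_u adj_sym by (cases ys) fastforce+
    define q2 where "q2 = xs @ ys'"
    have "successively (adj E) q2"
      using xs_walk ys_walk last_xs unfolding q2_def ys' successively_append_iff successively_Cons
      by auto
    moreover have "length q2 < length q" "q2 \<noteq> []" "hd q2 = hd q" "last q2 = last q"
      using xs last_xs unfolding q2_def q ys' by (auto simp: last_append)
    ultimately obtain q' where q': "q' \<noteq> []" "set q' \<subseteq> set q2 - {v}"
      "successively (adj (E - {{v, u}})) q'" "hd q' = hd q" "last q' = last q"
      using less.hyps[of q2] less.prems(3,4) by auto
    moreover have "set q2 \<subseteq> set q" unfolding q2_def q ys' by auto
    ultimately show ?thesis by blast
  qed
qed

lemma tree_remove_leaf:
  assumes tree: "is_tree V E" and v: "v \<in> V" and u: "u \<in> V" "u \<noteq> v"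
    and leaf: "{e \<in> E. v \<in> e} = {{v, u}}"
  shows "is_tree (V - {v}) (E - {{v, u}})"
proof -
  have sg: "simple_graph V E" using tree by (simp add: is_tree_def)
  have leaf': "\<forall>e\<in>E. v \<in> e \<longrightarrow> e = {v, u}" using leaf by blast
  have "simple_graph (V - {v}) (E - {{v, u}})"
    unfolding simple_graph_def
  proof (intro conjI ballI)
    show "finite (V - {v})" using sg by (simp add: simple_graph_def)
    fix e assume e: "e \<in> E - {{v, u}}"
    then have "e \<in> E" by blast
    then obtain a b where "a \<noteq> b" "e = {a, b}" "a \<in> V" "b \<in> V" by (rule simple_graph_edgeE[OF sg])
    moreover have "v \<notin> e" using e leaf' by blast
    ultimately show "\<exists>a b. a \<noteq> b \<and> e = {a, b} \<and> a \<in> V - {v} \<and> b \<in> V - {v}" by blast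
  qed
  moreover have "connected_graph (V - {v}) (E - {{v, u}})"
    unfolding connected_graph_def
  proof (intro ballI)
    fix x y assume x: "x \<in> V - {v}" and y: "y \<in> V - {v}"
    obtain q where q: "is_walk V E q" "hd q = x" "last q = y"
      using tree x y unfolding is_tree_def connected_graph_def by blast
    then obtain q' where "q' \<noteq> []" "set q' \<subseteq> V - {v}" "successively (adj (E - {{v, u}})) q'"
      "hd q' = x" "last q' = y"
      using walk_avoiding_leaf[OF sg leaf', of q] x y unfolding is_walk_successively by blast
    then show "\<exists>p. is_walk (V - {v}) (E - {{v, u}}) p \<and> hd p = x \<and> last p = y"
      unfolding is_walk_successively by blast
  qed
  moreover have "acyclic_graph (V - {v}) (E - {{v, u}})"
    unfolding acyclic_graph_def
  proof
    assume "\<exists>c. is_cycle (V - {v}) (E - {{v, u}}) c"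
    then obtain c where "is_cycle (V - {v}) (E - {{v, u}}) c" by blast
    then have "is_cycle V E c" unfolding is_cycle_def is_walk_def adj_def by auto
    then show False using tree by (simp add: is_tree_def acyclic_graph_def)
  qed
  ultimately show ?thesis using u unfolding is_tree_def by blast
qed

text \<open>A tree on N vertices has N - 1 edges (induction on N, deleting a leaf).\<close>
lemma tree_edge_count:
  "is_tree V E \<Longrightarrow> card E = card V - 1"
proof (induction "card V" arbitrary: V E rule: less_induct)
  case less
  have sg: "simple_graph V E" using less.prems by (simp add: is_tree_def)
  have fV: "finite V" and fE: "finite E"
    using sg simple_graph_finite_edges by (auto simp: simple_graph_def)
  show ?case
  proof (cases "2 \<le> card V")
    case False
    have "E = {}"
    proof (rule ccontr)
      assume "E \<noteq> {}"
      then obtain e where "e \<in> E" by blast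
      then obtain a b where "a \<noteq> b" "a \<in> V" "b \<in> V" by (rule simple_graph_edgeE[OF sg])
      then have "card {a, b} \<le> card V" using fV by (intro card_mono) auto
      then show False using False \<open>a \<noteq> b\<close> by simp
    qed
    then show ?thesis using False by simp
  next
    case True
    obtain v u where vu: "v \<in> V" "u \<in> V" "u \<noteq> v" "{e \<in> E. v \<in> e} = {{v, u}}"
      using tree_has_leaf[OF less.prems True] .
    have "card (V - {v}) < card V" by (rule card_Diff1_less[OF fV vu(1)])
    then have "card (E - {{v, u}}) = card (V - {v}) - 1"
      using less.hyps tree_remove_leaf[OF less.prems vu] by blast
    moreover have vu_edge: "{v, u} \<in> E" using vu(4) by blast
    moreover have "0 < card E" using vu_edge fE card_gt_0_iff by blast
    ultimately show ?thesis using vu fV fE True by (simp add: card_Diff_singleton)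
  qed
qed

section \<open>Trees of maximum degree two are paths\<close>

text \<open>If no vertex has degree above 2, a longest path contains all neighbours
  of its vertices: an inner vertex already has its two path neighbours.\<close>
lemma longest_path_neighbour_closed:
  assumes sg: "simple_graph V E" and deg: "\<forall>v\<in>V. degree E v \<le> 2"
    and lp: "longest_path V E p" and i: "i < length p" and w: "adj E (p ! i) w"
  shows "w \<in> set p"
proof (rule ccontr)
  assume w_new: "w \<notin> set p"
  have p: "is_walk V E p" "distinct p" using lp by (auto simp: longest_path_def)
  then have "p \<noteq> []" by (simp add: is_walk_def)
  consider "i = 0" | "i = length p - 1" | "0 < i" "i + 1 < length p" using i by linarith
  then show False
  proof cases
    case 1
    then have "hd p = p ! i" using \<open>p \<noteq> []\<close> by (simp add: hd_conv_nth)
    then show False using longest_path_hd_neighbour[OF sg lp, of w] w w_new by simp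
  next
    case 2
    then have "last p = p ! i" using \<open>p \<noteq> []\<close> by (simp add: last_conv_nth)
    then show False using longest_path_last_neighbour[OF sg lp, of w] w w_new by simp
  next
    case 3
    obtain j where j: "i = Suc j" using 3 by (cases i) auto
    have "adj E (p ! (i - 1)) (p ! i)" "adj E (p ! i) (p ! (i + 1))"
      using p(1) 3 unfolding is_walk_def j by simp_all
    then have nbrs: "adj E (p ! i) (p ! (i - 1))" "adj E (p ! i) (p ! (i + 1))"
      by (simp_all add: adj_sym)
    have "p ! (i - 1) \<noteq> p ! (i + 1)" using p(2) 3 by (simp add: nth_eq_iff_index_eq)
    moreover have "p ! (i - 1) \<in> set p" "p ! (i + 1) \<in> set p" using 3 by simp_all
    then have "p ! (i - 1) \<noteq> w" "p ! (i + 1) \<noteq> w" using w_new by blast+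
    ultimately have "3 \<le> degree E (p ! i)"
      by (rule degree_ge_3[OF simple_graph_finite_edges[OF sg] nbrs w])
    moreover have "p ! i \<in> V" using p(1) i nth_mem by (auto simp: is_walk_def)
    then have "degree E (p ! i) \<le> 2" using deg by blast
    ultimately show False by linarith
  qed
qed

lemma path_edges_iff:
  assumes "i < n" "j < n"
  shows "{i, j} \<in> path_edges n \<longleftrightarrow> j = Suc i \<or> i = Suc j"
  using assms unfolding path_edges_def by (auto simp: doubleton_eq_iff)

text \<open>A tree with a path through all its vertices is isomorphic to P_n: by the
  absence of chords, the only edges join consecutive vertices of the path.\<close>
lemma tree_spanning_path_iso:
  assumes tree: "is_tree V E" and p: "is_walk V E p" "distinct p" "set p = V"
    and n: "card V = n"
  shows "isomorphic_to_path V E n"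
proof -
  have sg: "simple_graph V E" using tree by (simp add: is_tree_def)
  have len: "length p = n" using distinct_card[OF p(2)] p(3) n by simp
  have bn: "bij_betw (nth p) {0..<n} V"
    using bij_betw_nth[OF p(2)] len p(3) by (simp add: atLeast0LessThan)
  define f where "f = inv_into {0..<n} (nth p)"
  have bf: "bij_betw f V {0..<n}" using bij_betw_inv_into[OF bn] f_def by simp
  have f_inv: "f x < n" "p ! f x = x" if "x \<in> V" for x
    using bij_betw_apply[OF bf that] f_inv_into_f[of x "nth p" "{0..<n}"]
      bij_betw_imp_surj_on[OF bn] that f_def by auto
  have edges: "{p ! i, p ! j} \<in> E \<longleftrightarrow> j = Suc i \<or> i = Suc j" if ij: "i < n" "j < n" for i j
  proof
    assume e: "{p ! i, p ! j} \<in> E"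
    then have "adj E (p ! i) (p ! j)" "adj E (p ! j) (p ! i)" by (auto simp: adj_def insert_commute)
    moreover have "i \<noteq> j" using simple_graph_adj(1)[OF sg] calculation by blast
    ultimately show "j = Suc i \<or> i = Suc j"
      using tree_path_no_chord[OF tree p(1,2), of i j] tree_path_no_chord[OF tree p(1,2), of j i]
        ij len by linarith
  next
    have step: "{p ! k, p ! Suc k} \<in> E" if "Suc k < n" for k
      using p(1) that len unfolding is_walk_def adj_def by simp
    assume "j = Suc i \<or> i = Suc j"
    then show "{p ! i, p ! j} \<in> E"
      using step[of i] step[of j] ij by (auto simp: insert_commute)
  qed
  have "{x, y} \<in> E \<longleftrightarrow> {f x, f y} \<in> path_edges n" if "x \<in> V" "y \<in> V" for x y
    using edges[of "f x" "f y"] path_edges_iff[of "f x" n "f y"] f_inv[OF that(1)] f_inv[OF that(2)]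
    by simp
  then show ?thesis unfolding isomorphic_to_path_def using bf by blast
qed

lemma tree_max_degree_2_is_path:
  assumes tree: "is_tree V E" and deg: "\<forall>v\<in>V. degree E v \<le> 2" and n: "card V = n"
  shows "isomorphic_to_path V E n"
proof -
  have sg: "simple_graph V E" and conn: "connected_graph V E"
    and "finite V" "V \<noteq> {}" using tree by (auto simp: is_tree_def simple_graph_def)
  then obtain p where lp: "longest_path V E p" using longest_path_exists by blast
  then have p: "is_walk V E p" "distinct p" by (auto simp: longest_path_def)
  then have "hd p \<in> set p" "set p \<subseteq> V" by (auto simp: is_walk_def)
  moreover have "w \<in> set p" if x: "x \<in> set p" and xw: "adj E x w" for x w
  proof -
    obtain i where "i < length p" "p ! i = x" using x by (meson in_set_conv_nth)
    then show ?thesis using longest_path_neighbour_closed[OF sg deg lp] xw by blast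
  qed
  ultimately have "set p = V" using connected_closed_subset[OF conn] by blast
  then show ?thesis using tree_spanning_path_iso[OF tree p] n by blast
qed

lemma tree_not_path_high_vertex:
  assumes tree: "is_tree V E" and "card V = n" and "\<not> isomorphic_to_path V E n"
  obtains v where "v \<in> V" "3 \<le> degree E v"
  using tree_max_degree_2_is_path[OF tree _ assms(2)] assms(3) that by fastforce

section \<open>Degree classes and degree sequences\<close>

definition degree_class :: "'a set \<Rightarrow> 'a set set \<Rightarrow> nat \<Rightarrow> 'a set" where
  "degree_class V E d = {v \<in> V. degree E v = d}"

definition high_vertices :: "'a set \<Rightarrow> 'a set set \<Rightarrow> 'a set" where
  "high_vertices V E = {v \<in> V. 3 \<le> degree E v}"

lemma count_degree_seq:
  assumes "finite V"
  shows "count (degree_seq V E) d = card (degree_class V E d)"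
proof -
  have "count (degree_seq V E) d = (\<Sum>x | x \<in># mset_set V \<and> d = degree E x. count (mset_set V) x)"
    unfolding degree_seq_def by (rule count_image_mset')
  also have "\<dots> = (\<Sum>x | x \<in> V \<and> d = degree E x. 1)"
    using assms by (intro sum.cong) auto
  also have "\<dots> = card (degree_class V E d)" by (simp add: degree_class_def eq_commute)
  finally show ?thesis .
qed

lemma degree_seq_123_iff:
  assumes fV: "finite V"
  shows "degree_seq V E = replicate_mset a 3 + replicate_mset b 2 + replicate_mset c 1 \<longleftrightarrow>
    (\<forall>v\<in>V. degree E v \<in> {1, 2, 3}) \<and> card (degree_class V E 3) = a \<and>
    card (degree_class V E 2) = b \<and> card (degree_class V E 1) = c"
  (is "_ = ?D \<longleftrightarrow> ?rhs")
proof
  assume seq: "degree_seq V E = ?D"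
  have counts: "card (degree_class V E d) = count ?D d" for d
    using count_degree_seq[OF fV, of E d] seq by simp
  have "degree E v \<in> {1, 2, 3}" if "v \<in> V" for v
  proof -
    have "v \<in> degree_class V E (degree E v)" using that by (simp add: degree_class_def)
    then have "card (degree_class V E (degree E v)) \<noteq> 0"
      using fV by (auto simp: degree_class_def)
    then show ?thesis using counts[of "degree E v"] by (auto split: if_splits)
  qed
  then show ?rhs using counts[of 1] counts[of 2] counts[of 3] by simp
next
  assume rhs: ?rhs
  show "degree_seq V E = ?D"
  proof (rule multiset_eqI)
    fix d
    have "degree_class V E d = {}" if "d \<notin> {1, 2, 3}"
      using rhs that by (auto simp: degree_class_def)
    then show "count (degree_seq V E) d = count ?D d"
      using rhs count_degree_seq[OF fV, of E d] by (cases "d \<in> {1, 2, 3}") auto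
  qed
qed

lemma sum_eq_3_card_iff:
  fixes d :: "'a \<Rightarrow> nat"
  assumes "finite M" "\<forall>v\<in>M. 3 \<le> d v"
  shows "(\<Sum>v\<in>M. d v) = 3 * card M \<longleftrightarrow> (\<forall>v\<in>M. d v = 3)"
proof
  have "(\<Sum>v\<in>M. d v) = (\<Sum>v\<in>M. (d v - 3) + 3)" using assms(2) by (intro sum.cong) auto
  also have "\<dots> = (\<Sum>v\<in>M. d v - 3) + 3 * card M" by (simp add: sum.distrib)
  finally have split: "(\<Sum>v\<in>M. d v) = (\<Sum>v\<in>M. d v - 3) + 3 * card M" .
  assume "(\<Sum>v\<in>M. d v) = 3 * card M"
  then have "\<forall>v\<in>M. d v - 3 = 0" using split assms(1) by simp
  then show "\<forall>v\<in>M. d v = 3" using assms(2) by fastforce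
qed simp

lemma high_vertices_degree_sum:
  "3 * card (high_vertices V E) \<le> (\<Sum>v\<in>high_vertices V E. degree E v)"
proof -
  have "(\<Sum>v\<in>high_vertices V E. 3) \<le> (\<Sum>v\<in>high_vertices V E. degree E v)"
    by (rule sum_mono) (simp add: high_vertices_def)
  then show ?thesis by (simp add: mult.commute)
qed

lemma sum_degree_classes:
  fixes h :: "'a \<Rightarrow> 'b::comm_monoid_add"
  assumes fV: "finite V" and dpos: "\<forall>v\<in>V. 1 \<le> degree E v"
  shows "(\<Sum>v\<in>V. h v) = (\<Sum>v\<in>degree_class V E 1. h v) + (\<Sum>v\<in>degree_class V E 2. h v)
           + (\<Sum>v\<in>high_vertices V E. h v)"
proof -
  have V: "V = degree_class V E 1 \<union> (degree_class V E 2 \<union> high_vertices V E)"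
    using dpos by (force simp: degree_class_def high_vertices_def)
  have "(\<Sum>v\<in>V. h v) = (\<Sum>v\<in>degree_class V E 1. h v)
      + (\<Sum>v\<in>degree_class V E 2 \<union> high_vertices V E. h v)"
    by (subst V, rule sum.union_disjoint) (use fV in \<open>auto simp: degree_class_def high_vertices_def\<close>)
  also have "(\<Sum>v\<in>degree_class V E 2 \<union> high_vertices V E. h v)
      = (\<Sum>v\<in>degree_class V E 2. h v) + (\<Sum>v\<in>high_vertices V E. h v)"
    by (rule sum.union_disjoint) (use fV in \<open>auto simp: degree_class_def high_vertices_def\<close>)
  finally show ?thesis by (simp add: add.assoc)
qed

lemma degree_seq_classes_iff:
  assumes fV: "finite V" and dpos: "\<forall>v\<in>V. 1 \<le> degree E v"
  shows "degree_seq V E = replicate_mset a 3 + replicate_mset b 2 + replicate_mset c 1 \<longleftrightarrow>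
    (\<Sum>v\<in>high_vertices V E. degree E v) = 3 * card (high_vertices V E) \<and>
    card (high_vertices V E) = a \<and> card (degree_class V E 2) = b \<and> card (degree_class V E 1) = c"
proof -
  have fH: "finite (high_vertices V E)" using fV by (simp add: high_vertices_def)
  have ge3: "\<forall>v\<in>high_vertices V E. 3 \<le> degree E v" by (simp add: high_vertices_def)
  have "(\<forall>v\<in>V. degree E v \<in> {1, 2, 3}) \<longleftrightarrow> (\<forall>v\<in>high_vertices V E. degree E v = 3)"
  proof
    assume high3: "\<forall>v\<in>high_vertices V E. degree E v = 3"
    have "degree E v \<in> {1, 2, 3}" if "v \<in> V" for v
    proof (cases "3 \<le> degree E v")
      case True
      then have "v \<in> high_vertices V E" using that by (simp add: high_vertices_def)
      then show ?thesis using high3 by simp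
    next
      case False
      moreover have "1 \<le> degree E v" using dpos that by blast
      ultimately show ?thesis by auto
    qed
    then show "\<forall>v\<in>V. degree E v \<in> {1, 2, 3}" by blast
  next
    assume all: "\<forall>v\<in>V. degree E v \<in> {1, 2, 3}"
    show "\<forall>v\<in>high_vertices V E. degree E v = 3"
    proof
      fix v assume "v \<in> high_vertices V E"
      then have "degree E v \<in> {1, 2, 3}" "3 \<le> degree E v" using all by (auto simp: high_vertices_def)
      then show "degree E v = 3" by auto
    qed
  qed
  also have "\<dots> \<longleftrightarrow> (\<Sum>v\<in>high_vertices V E. degree E v) = 3 * card (high_vertices V E)"
    by (rule sum_eq_3_card_iff[OF fH ge3, symmetric])
  finally have all_123: "(\<forall>v\<in>V. degree E v \<in> {1, 2, 3}) \<longleftrightarrow>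
      (\<Sum>v\<in>high_vertices V E. degree E v) = 3 * card (high_vertices V E)" .
  have high_eq: "high_vertices V E = degree_class V E 3" if "\<forall>v\<in>V. degree E v \<in> {1, 2, 3}"
    using that by (auto simp: high_vertices_def degree_class_def)
  show ?thesis
    unfolding degree_seq_123_iff[OF fV] all_123[symmetric] using high_eq by auto
qed

section \<open>Total irregularity in terms of degree classes\<close>

lemma irr_t_degree_classes:
  assumes fV: "finite V" and dpos: "\<forall>v\<in>V. 1 \<le> degree E v"
  defines "L \<equiv> degree_class V E 1" and "K \<equiv> degree_class V E 2" and "M \<equiv> high_vertices V E"
  defines "l \<equiv> real (card L)" and "k \<equiv> real (card K)" and "m \<equiv> real (card M)"
    and "S \<equiv> real (\<Sum>v\<in>M. degree E v)"
  shows "irr_t V E = l * k + l * (S - m) + k * (S - 2 * m)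
           + (\<Sum>x\<in>M. \<Sum>y\<in>M. \<bar>real (degree E x) - real (degree E y)\<bar>) / 2"
proof -
  define g where "g x y = \<bar>real (degree E x) - real (degree E y)\<bar>" for x y
  have split: "(\<Sum>v\<in>V. h v) = (\<Sum>v\<in>L. h v) + (\<Sum>v\<in>K. h v) + (\<Sum>v\<in>M. h v)" for h :: "'a \<Rightarrow> real"
    unfolding L_def K_def M_def by (rule sum_degree_classes[OF fV dpos])
  have SM: "(\<Sum>y\<in>M. real (degree E y)) = S" unfolding S_def by simp
  have rowL: "(\<Sum>y\<in>V. g x y) = k + (S - m)" if "x \<in> L" for x
  proof -
    have "degree E x = 1" using that by (simp add: L_def degree_class_def)
    then have "(\<Sum>y\<in>L. g x y) = 0" "(\<Sum>y\<in>K. g x y) = (\<Sum>y\<in>K. 1)"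
      "(\<Sum>y\<in>M. g x y) = (\<Sum>y\<in>M. real (degree E y) - 1)"
      by (auto simp: g_def L_def K_def M_def degree_class_def high_vertices_def intro!: sum.cong)
    then show ?thesis using split[of "g x"] SM by (simp add: k_def m_def sum_subtractf)
  qed
  have rowK: "(\<Sum>y\<in>V. g x y) = l + (S - 2 * m)" if "x \<in> K" for x
  proof -
    have "degree E x = 2" using that by (simp add: K_def degree_class_def)
    then have "(\<Sum>y\<in>K. g x y) = 0" "(\<Sum>y\<in>L. g x y) = (\<Sum>y\<in>L. 1)"
      "(\<Sum>y\<in>M. g x y) = (\<Sum>y\<in>M. real (degree E y) - 2)"
      by (auto simp: g_def L_def K_def M_def degree_class_def high_vertices_def intro!: sum.cong)
    then show ?thesis using split[of "g x"] SM by (simp add: l_def m_def sum_subtractf)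
  qed
  have rowM: "(\<Sum>y\<in>V. g x y) = l * (real (degree E x) - 1) + k * (real (degree E x) - 2)
      + (\<Sum>y\<in>M. g x y)" if "x \<in> M" for x
  proof -
    have "3 \<le> degree E x" using that by (simp add: M_def high_vertices_def)
    then have "(\<Sum>y\<in>L. g x y) = (\<Sum>y\<in>L. real (degree E x) - 1)"
      "(\<Sum>y\<in>K. g x y) = (\<Sum>y\<in>K. real (degree E x) - 2)"
      by (auto simp: g_def L_def K_def degree_class_def intro!: sum.cong)
    then show ?thesis using split[of "g x"] by (simp add: l_def k_def mult.commute)
  qed
  have "2 * irr_t V E = (\<Sum>x\<in>V. \<Sum>y\<in>V. g x y)" unfolding irr_t_def g_def by simp
  also have "\<dots> = (\<Sum>x\<in>L. \<Sum>y\<in>V. g x y) + (\<Sum>x\<in>K. \<Sum>y\<in>V. g x y) + (\<Sum>x\<in>M. \<Sum>y\<in>V. g x y)"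
    by (rule split)
  also have "(\<Sum>x\<in>L. \<Sum>y\<in>V. g x y) = l * (k + (S - m))" using rowL by (simp add: l_def)
  also have "(\<Sum>x\<in>K. \<Sum>y\<in>V. g x y) = k * (l + (S - 2 * m))" using rowK by (simp add: k_def)
  also have "(\<Sum>x\<in>M. \<Sum>y\<in>V. g x y) = (\<Sum>x\<in>M. l * (real (degree E x) - 1)
      + k * (real (degree E x) - 2) + (\<Sum>y\<in>M. g x y))"
    using rowM by simp
  also have "\<dots> = l * (S - m) + k * (S - 2 * m) + (\<Sum>x\<in>M. \<Sum>y\<in>M. g x y)"
    by (simp add: sum.distrib sum_subtractf SM m_def flip: sum_distrib_left)
  finally show ?thesis unfolding g_def by (simp add: algebra_simps)
qed

lemma high_pairs_irregularity:
  fixes V :: "'a set" and E :: "'a set set"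
  assumes fV: "finite V"
  defines "M \<equiv> high_vertices V E"
  shows "0 \<le> (\<Sum>x\<in>M. \<Sum>y\<in>M. \<bar>real (degree E x) - real (degree E y)\<bar>)"
    and "(\<Sum>v\<in>M. degree E v) = 3 * card M \<Longrightarrow>
      (\<Sum>x\<in>M. \<Sum>y\<in>M. \<bar>real (degree E x) - real (degree E y)\<bar>) = 0"
proof -
  show "0 \<le> (\<Sum>x\<in>M. \<Sum>y\<in>M. \<bar>real (degree E x) - real (degree E y)\<bar>)"
    by (intro sum_nonneg) simp
  have fM: "finite M" and ge3: "\<forall>v\<in>M. 3 \<le> degree E v"
    using fV by (simp_all add: M_def high_vertices_def)
  assume "(\<Sum>v\<in>M. degree E v) = 3 * card M"
  then have "\<forall>v\<in>M. degree E v = 3" using sum_eq_3_card_iff[OF fM ge3] by simp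
  then show "(\<Sum>x\<in>M. \<Sum>y\<in>M. \<bar>real (degree E x) - real (degree E y)\<bar>) = 0" by simp
qed

text \<open>From the edge count of a tree and the handshake lemma: with l leaves, k
  vertices of degree 2 and high vertices of degree sum S, l + 2k + S = 2n - 2.\<close>
lemma tree_degree_class_counts:
  assumes tree: "is_tree V E" and two: "2 \<le> card V"
  shows "card V = card (degree_class V E 1) + card (degree_class V E 2) + card (high_vertices V E)"
    and "card (degree_class V E 1) + 2 * card (degree_class V E 2)
           + (\<Sum>v\<in>high_vertices V E. degree E v) + 2 = 2 * card V"
proof -
  have sg: "simple_graph V E" using tree by (simp add: is_tree_def)
  have fV: "finite V" using sg by (simp add: simple_graph_def)
  have dpos: "\<forall>v\<in>V. 1 \<le> degree E v" using tree_degree_pos[OF tree two] by blast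
  show "card V = card (degree_class V E 1) + card (degree_class V E 2) + card (high_vertices V E)"
    using sum_degree_classes[OF fV dpos, of "\<lambda>_. 1::nat"] by simp
  have "(\<Sum>v\<in>V. degree E v) = card (degree_class V E 1) + 2 * card (degree_class V E 2)
      + (\<Sum>v\<in>high_vertices V E. degree E v)"
    using sum_degree_classes[OF fV dpos, of "degree E"] by (simp add: degree_class_def)
  moreover have "(\<Sum>v\<in>V. degree E v) = 2 * (card V - 1)"
    using handshake[OF sg] tree_edge_count[OF tree] by simp
  ultimately show "card (degree_class V E 1) + 2 * card (degree_class V E 2)
      + (\<Sum>v\<in>high_vertices V E. degree E v) + 2 = 2 * card V"
    using two by linarith
qed

section \<open>The arithmetic estimate\<close>

text \<open>The main term l k + l (S - m) + k (S - 2m) of the irregularity is at least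
  6n - 20 under the tree constraints, unless m = 1 and S = 3; equality forces
  m = 2 and S = 6.  Writing S = 3m + R, the constraints give l = m + R + 2 and the
  excess over 6n - 20 is an explicit polynomial with nonnegative coefficients.\<close>
lemma class_bound:
  fixes l k m S n :: nat
  assumes n: "n = l + k + m" and degsum: "l + 2 * k + S + 2 = 2 * n"
    and S: "3 * m \<le> S" and m: "1 \<le> m" and not_broom: "\<not> (m = 1 \<and> S = 3)"
  defines "F \<equiv> real l * real k + real l * (real S - real m) + real k * (real S - 2 * real m)"
  shows "6 * real n - 20 \<le> F" and "F \<le> 6 * real n - 20 \<Longrightarrow> m = 2 \<and> S = 6"
proof -
  define R where "R = S - 3 * m"
  have SR: "S = 3 * m + R" using S R_def by simp
  have l: "l = m + R + 2" using n degsum SR by linarith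
  have "6 * real n - 20 \<le> F \<and> (F \<le> 6 * real n - 20 \<longrightarrow> m = 2 \<and> S = 6)"
  proof (cases "m = 1")
    case True
    then have R: "1 \<le> R" using not_broom SR by auto
    have "F - (6 * real n - 20) = 2 * real k * (real R - 1) + real R * (real R - 1) + 2"
      unfolding F_def n l SR True by (simp add: algebra_simps)
    moreover have "0 \<le> real k * (real R - 1)" "0 \<le> real R * (real R - 1)" using R by simp_all
    ultimately show ?thesis by linarith
  next
    case False
    define a where "a = m - 2"
    have a: "m = a + 2" using m False a_def by simp
    have "F - (6 * real n - 20) = 2 * real R + 2 * real a * real k + 2 * real a * real a
        + 2 * real R * real k + 3 * real a * real R + real R * real R"
      unfolding F_def n l SR a by (simp add: algebra_simps)
    moreover have "0 \<le> real a * real k" "0 \<le> real R * real k" "0 \<le> real a * real R"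
      "0 \<le> real R * real R" "0 \<le> real a * real a" by simp_all
    ultimately have "6 * real n - 20 \<le> F"
      and "F \<le> 6 * real n - 20 \<Longrightarrow> real R \<le> 0 \<and> real a * real a \<le> 0" by linarith+
    then show ?thesis using SR a by (auto simp: mult_le_0_iff)
  qed
  then show "6 * real n - 20 \<le> F" and "F \<le> 6 * real n - 20 \<Longrightarrow> m = 2 \<and> S = 6" by auto
qed

theorem theorem7:
  fixes V :: "'a set" and E :: "'a set set" and n :: nat
  assumes "n \<ge> 6"
    and "is_tree V E"
    and "card V = n"
    and "\<not> isomorphic_to_path V E n"
    and "degree_seq V E \<noteq> {#3#} + replicate_mset (n - 4) 2 + replicate_mset 3 1"
  shows "irr_t V E \<ge> 6 * real n - 20 \<and>
    (irr_t V E = 6 * real n - 20 \<longleftrightarrow>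
       degree_seq V E = replicate_mset 2 3 + replicate_mset (n - 6) 2 + replicate_mset 4 1)"
proof -
  note tree = assms(2)
  have two: "2 \<le> card V" and fV: "finite V" using assms(1,3) card.infinite by fastforce+
  have dpos: "\<forall>v\<in>V. 1 \<le> degree E v" using tree_degree_pos[OF tree two] by blast
  define H where "H = high_vertices V E"
  define l k m S where "l = card (degree_class V E 1)" and "k = card (degree_class V E 2)"
    and "m = card H" and "S = (\<Sum>v\<in>H. degree E v)"
  define F where "F = real l * real k + real l * (real S - real m) + real k * (real S - 2 * real m)"
  define P where "P = (\<Sum>x\<in>H. \<Sum>y\<in>H. \<bar>real (degree E x) - real (degree E y)\<bar>)"
  have fH: "finite H" using fV by (simp add: H_def high_vertices_def)
  have n: "n = l + k + m" and degsum: "l + 2 * k + S + 2 = 2 * n"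
    using tree_degree_class_counts[OF tree two] assms(3) by (simp_all add: l_def k_def m_def S_def H_def)
  have "3 * m \<le> S" using high_vertices_degree_sum by (simp add: m_def S_def H_def)
  moreover have "1 \<le> m"
    using tree_not_path_high_vertex[OF tree assms(3,4)] fH
    by (auto simp: m_def H_def high_vertices_def Suc_le_eq card_gt_0_iff)
  moreover have seq: "degree_seq V E = replicate_mset a 3 + replicate_mset b 2 + replicate_mset c 1
      \<longleftrightarrow> S = 3 * m \<and> m = a \<and> k = b \<and> l = c" for a b c
    using degree_seq_classes_iff[OF fV dpos] by (simp add: l_def k_def m_def S_def H_def)
  moreover have "\<not> (m = 1 \<and> S = 3)" using seq[of 1 "n - 4" 3] assms(5) n degsum by auto
  ultimately have bound: "6 * real n - 20 \<le> F" and extremal: "F \<le> 6 * real n - 20 \<Longrightarrow> m = 2 \<and> S = 6"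
    using class_bound[OF n degsum] unfolding F_def by blast+
  have irr: "irr_t V E = F + P / 2"
    using irr_t_degree_classes[OF fV dpos] by (simp add: F_def P_def l_def k_def m_def S_def H_def)
  have "0 \<le> P" and "S = 3 * m \<Longrightarrow> P = 0"
    using high_pairs_irregularity[OF fV] by (simp_all add: P_def S_def m_def H_def)
  then have "irr_t V E = 6 * real n - 20 \<longleftrightarrow> m = 2 \<and> S = 6"
    using irr bound extremal n degsum unfolding F_def by auto
  then show ?thesis using irr bound \<open>0 \<le> P\<close> seq[of 2 "n - 6" 4] n degsum by auto
qed

end
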